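(* Let $n\geqslant 18$, $k=\lceil\log_2 n\rceil$, $G=(V,E)$ the complete graph on $V=\{1,\ldots,n\}$, and for $i\in V$ let $\mathbf i\in\{0,1\}^k$ be the binary digits of $i-1$ (i.e. $i-1=\sum_{t=1}^k i_t2^{t-1}$). Let $b(\mathbf x)=\sum_{ij\in E}(-1)^{\langle\mathbf i,\mathbf j\rangle}x_ix_j$. Then for $\mathbf x=(1/2,\ldots,1/2)$, \[\operatorname{mcgap}[b](\mathbf x)\geqslant\frac{\sqrt n}{3}\operatorname{chgap}[b](\mathbf x).\]
   Context: $\langle\mathbf i,\mathbf j\rangle=\sum_t i_tj_t$. $B=\{(\mathbf x,z)\in[0,1]^n\times\mathbb R:z=b(\mathbf x)\}$. The McCormick polytopes are $P=\{(\mathbf x,\mathbf y)\in[0,1]^n\times[0,1]^{|E|}: y_{ij}\le x_i,\ y_{ij}\le x_j,\ y_{ij}\ge x_i+x_j-1\ \forall ij\in E\}$ and $Q=\{(\mathbf x,z)\in[0,1]^n\times\mathbb R:\exists\mathbf y\in[0,1]^{|E|}\text{ with }(\mathbf x,\mathbf y)\in P,\ z=\sum_{ij\in E}a_{ij}y_{ij}\}$ where $a_{ij}$ are the coefficients of $b$. $\operatorname{cav}[b](\mathbf x)=\max\{z:(\mathbf x,z)\in\operatorname{conv}(B)\}$, $\operatorname{vex}[b](\mathbf x)=\min\{z:(\mathbf x,z)\in\operatorname{conv}(B)\}$, $\operatorname{mcu}[b](\mathbf x)=\max\{z:(\mathbf x,z)\in Q\}$, $\operatorname{mcl}[b](\mathbf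 x)=\min\{z:(\mathbf x,z)\in Q\}$, $\operatorname{chgap}[b]=\operatorname{cav}[b]-\operatorname{vex}[b]$, $\operatorname{mcgap}[b]=\operatorname{mcu}[b]-\operatorname{mcl}[b]$. *)

theory Defs
  imports "HOL-Analysis.Analysis"
begin

definition cube :: "nat \<Rightarrow> (nat \<Rightarrow> real) set" where
  "cube n = {x. (\<forall>i\<in>{1..n}. 0 \<le> x i \<and> x i \<le> 1) \<and> (\<forall>i. i \<notin> {1..n} \<longrightarrow> x i = 0)}"

definition edges :: "nat \<Rightarrow> (nat \<times> nat) set" where
  "edges n = {(i,j). 1 \<le> i \<and> i < j \<and> j \<le> n}"

definition digit :: "nat \<Rightarrow> nat \<Rightarrow> nat" where
  "digit i t = ((i - 1) div 2 ^ (t - 1)) mod 2"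

definition bitinner :: "nat \<Rightarrow> nat \<Rightarrow> nat \<Rightarrow> nat" where
  "bitinner k i j = (\<Sum>t=1..k. digit i t * digit j t)"

definition kbits :: "nat \<Rightarrow> nat" where
  "kbits n = nat \<lceil>log 2 (real n)\<rceil>"

definition coef :: "nat \<Rightarrow> nat \<times> nat \<Rightarrow> real" where
  "coef n e = (-1) ^ bitinner (kbits n) (fst e) (snd e)"

definition bilin :: "(nat \<times> nat) set \<Rightarrow> (nat \<times> nat \<Rightarrow> real) \<Rightarrow> (nat \<Rightarrow> real) \<Rightarrow> real" where
  "bilin E a x = (\<Sum>e\<in>E. a e * x (fst e) * x (snd e))"

definition graphB :: "nat \<Rightarrow> (nat \<times> nat) set \<Rightarrow> (nat \<times> nat \<Rightarrow> real) \<Rightarrow> ((nat \<Rightarrow> real) \<times> real) set" where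
  "graphB n E a = {(x,z). x \<in> cube n \<and> z = bilin E a x}"

definition convh :: "((nat \<Rightarrow> real) \<times> real) set \<Rightarrow> ((nat \<Rightarrow> real) \<times> real) set" where
  "convh S = {(x,z). \<exists>(m::nat) (p::nat \<Rightarrow> (nat \<Rightarrow> real) \<times> real) (u::nat \<Rightarrow> real).
      (\<forall>l<m. p l \<in> S \<and> 0 \<le> u l) \<and> (\<Sum>l<m. u l) = 1 \<and>
      x = (\<lambda>i. \<Sum>l<m. u l * fst (p l) i) \<and> z = (\<Sum>l<m. u l * snd (p l))}"

definition cav :: "nat \<Rightarrow> (nat \<times> nat) set \<Rightarrow> (nat \<times> nat \<Rightarrow> real) \<Rightarrow> (nat \<Rightarrow> real) \<Rightarrow> real" where
  "cav n E a x = Sup {z. (x,z) \<in> convh (graphB n E a)}"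

definition vex :: "nat \<Rightarrow> (nat \<times> nat) set \<Rightarrow> (nat \<times> nat \<Rightarrow> real) \<Rightarrow> (nat \<Rightarrow> real) \<Rightarrow> real" where
  "vex n E a x = Inf {z. (x,z) \<in> convh (graphB n E a)}"

definition mcP :: "nat \<Rightarrow> (nat \<times> nat) set \<Rightarrow> ((nat \<Rightarrow> real) \<times> (nat \<times> nat \<Rightarrow> real)) set" where
  "mcP n E = {(x,y). x \<in> cube n \<and> (\<forall>e\<in>E. 0 \<le> y e \<and> y e \<le> 1 \<and>
      y e \<le> x (fst e) \<and> y e \<le> x (snd e) \<and> y e \<ge> x (fst e) + x (snd e) - 1)}"

definition mcQ :: "nat \<Rightarrow> (nat \<times> nat) set \<Rightarrow> (nat \<times> nat \<Rightarrow> real) \<Rightarrow> ((nat \<Rightarrow> real) \<times> real) set" where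
  "mcQ n E a = {(x,z). x \<in> cube n \<and> (\<exists>y. (x,y) \<in> mcP n E \<and> z = (\<Sum>e\<in>E. a e * y e))}"

definition mcu :: "nat \<Rightarrow> (nat \<times> nat) set \<Rightarrow> (nat \<times> nat \<Rightarrow> real) \<Rightarrow> (nat \<Rightarrow> real) \<Rightarrow> real" where
  "mcu n E a x = Sup {z. (x,z) \<in> mcQ n E a}"

definition mcl :: "nat \<Rightarrow> (nat \<times> nat) set \<Rightarrow> (nat \<times> nat \<Rightarrow> real) \<Rightarrow> (nat \<Rightarrow> real) \<Rightarrow> real" where
  "mcl n E a x = Inf {z. (x,z) \<in> mcQ n E a}"

definition chgap where "chgap n E a x = cav n E a x - vex n E a x"
definition mcgap where "mcgap n E a x = mcu n E a x - mcl n E a x"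

end

theory Submission
  imports Defs
begin

text \<open>Every coefficient is \<open>\<plusminus>1\<close>, so at the centre \<open>x\<close> of the cube the McCormick points
  \<open>y\<^sub>i\<^sub>j = (1 \<plusminus> a\<^sub>i\<^sub>j)/4\<close> show that the McCormick gap is at least \<open>|E|/2 = n(n-1)/4\<close>.
  For the convex hull, write \<open>b\<close> as its affine part at the centre plus the form
  \<open>\<Sum> a\<^sub>i\<^sub>j (x\<^sub>i - 1/2)(x\<^sub>j - 1/2)\<close>. Averaging graph points over \<open>x\<close> kills the affine part, so
  the hull gap is at most twice the maximum of that form on the cube. Its matrix is a principal
  submatrix of the \<open>2\<^sup>k \<times> 2\<^sup>k\<close> Sylvester--Hadamard matrix, whose columns are orthogonal, so
  Cauchy--Schwarz bounds it by \<open>(\<surd>(2\<^sup>k) + 1) n/8\<close>; with \<open>2\<^sup>k \<le> 2n\<close> this gives the ratio \<open>\<surd>n/3\<close>.\<close>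

fun bit_dot :: "nat \<Rightarrow> nat \<Rightarrow> nat \<Rightarrow> nat" where
  "bit_dot 0 m p = 0"
| "bit_dot (Suc k) m p = m mod 2 * (p mod 2) + bit_dot k (m div 2) (p div 2)"

lemma sum_digit_products_eq_bit_dot:
  "(\<Sum>t=1..k. m div 2 ^ (t - 1) mod 2 * (p div 2 ^ (t - 1) mod 2)) = bit_dot k m p"
proof (induction k arbitrary: m p)
  case 0
  then show ?case by simp
next
  case (Suc k)
  have shift: "m div 2 ^ t mod 2 * (p div 2 ^ t mod 2)
      = m div 2 div 2 ^ (t - 1) mod 2 * (p div 2 div 2 ^ (t - 1) mod 2)" if "t \<in> {1..k}" for t
  proof -
    from that have "(2::nat) ^ t = 2 * 2 ^ (t - 1)" by (cases t) auto
    then show ?thesis by (simp add: div_mult2_eq)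
  qed
  have "(\<Sum>t=1..Suc k. m div 2 ^ (t - 1) mod 2 * (p div 2 ^ (t - 1) mod 2))
      = m mod 2 * (p mod 2) + (\<Sum>t=Suc 1..Suc k. m div 2 ^ (t - 1) mod 2 * (p div 2 ^ (t - 1) mod 2))"
    by (simp add: sum.atLeast_Suc_atMost)
  also have "\<dots> = m mod 2 * (p mod 2) + (\<Sum>t=1..k. m div 2 ^ t mod 2 * (p div 2 ^ t mod 2))"
    by (subst sum.shift_bounds_cl_Suc_ivl) simp
  also have "\<dots> = m mod 2 * (p mod 2) + bit_dot k (m div 2) (p div 2)"
    using Suc.IH[of "m div 2" "p div 2"] by (simp add: shift)
  finally show ?case by simp
qed

lemma bitinner_eq_bit_dot: "bitinner k i j = bit_dot k (i - 1) (j - 1)"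
  unfolding bitinner_def digit_def by (rule sum_digit_products_eq_bit_dot)

lemma sum_lessThan_even_odd:
  fixes f :: "nat \<Rightarrow> 'a::comm_monoid_add"
  shows "(\<Sum>m<2 * N. f m) = (\<Sum>m<N. f (2 * m) + f (2 * m + 1))"
  by (induction N) (simp_all add: sum.distrib ac_simps)

text \<open>Orthogonality of the characters of \<open>(\<int>/2)\<^sup>k\<close>: splitting \<open>m\<close> by its lowest bit,
  a mismatch in the lowest bits of \<open>p\<close> and \<open>q\<close> makes the two halves cancel.\<close>
lemma sum_sign_bit_dot:
  assumes "p < 2 ^ k" "q < 2 ^ k"
  shows "(\<Sum>m<2 ^ k. (-1::real) ^ (bit_dot k m p + bit_dot k m q)) = (if p = q then 2 ^ k else 0)"
  using assms
proof (induction k arbitrary: p q)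
  case 0
  then show ?case by simp
next
  case (Suc k)
  let ?S = "\<Sum>m<2 ^ k. (-1::real) ^ (bit_dot k m (p div 2) + bit_dot k m (q div 2))"
  have odd: "(-1::real) ^ (bit_dot (Suc k) (2 * m + 1) p + bit_dot (Suc k) (2 * m + 1) q)
      = (-1) ^ (p mod 2 + q mod 2) * (-1) ^ (bit_dot k m (p div 2) + bit_dot k m (q div 2))" for m
  proof -
    have "Suc (2 * m) mod 2 = 1" "Suc (2 * m) div 2 = m" by presburger+
    then show ?thesis by (simp add: power_add ac_simps)
  qed
  have split: "(\<Sum>m<2 ^ Suc k. (-1::real) ^ (bit_dot (Suc k) m p + bit_dot (Suc k) m q))
      = (1 + (-1) ^ (p mod 2 + q mod 2)) * ?S"
    by (simp only: power_Suc sum_lessThan_even_odd odd)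
       (simp add: sum.distrib sum_distrib_left algebra_simps)
  have halves: "p div 2 < 2 ^ k" "q div 2 < 2 ^ k" using Suc.prems by auto
  show ?case
  proof (cases "p mod 2 = q mod 2")
    case True
    then have "p = q \<longleftrightarrow> p div 2 = q div 2" by (metis div_mult_mod_eq)
    with True show ?thesis
      unfolding split Suc.IH[OF halves] by (simp add: power_add flip: power_mult_distrib)
  next
    case False
    then have "p mod 2 + q mod 2 = 1" "p \<noteq> q" by presburger+
    then show ?thesis unfolding split by simp
  qed
qed

definition walsh :: "nat \<Rightarrow> nat \<Rightarrow> nat \<Rightarrow> real" where
  "walsh K i j = (-1) ^ bitinner K i j"

lemma walsh_commute: "walsh K i j = walsh K j i"
  unfolding walsh_def bitinner_def by (simp add: mult.commute)

lemma abs_walsh [simp]: "\<bar>walsh K i j\<bar> = 1"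
  unfolding walsh_def by simp

lemma walsh_squared [simp]: "(walsh K i j)\<^sup>2 = 1"
  by (metis abs_walsh power2_abs power_one)

lemma walsh_orthogonal:
  assumes "j \<in> {1..2 ^ K}" "l \<in> {1..2 ^ K}"
  shows "(\<Sum>i\<in>{1..2 ^ K}. walsh K i j * walsh K i l) = (if j = l then 2 ^ K else 0)"
proof -
  have "{1..2 ^ K} = Suc ` {..<2 ^ K}" by (simp add: image_Suc_lessThan)
  then have "(\<Sum>i\<in>{1..2 ^ K}. walsh K i j * walsh K i l)
      = (\<Sum>m<2 ^ K. (-1) ^ (bit_dot K m (j - 1) + bit_dot K m (l - 1)))"
    by (simp add: sum.reindex walsh_def bitinner_eq_bit_dot power_add)
  also have "\<dots> = (if j = l then 2 ^ K else 0)"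
    using assms by (subst sum_sign_bit_dot) auto
  finally show ?thesis .
qed

lemma orthogonal_quadratic_form_le:
  fixes h :: "'a \<Rightarrow> 'a \<Rightarrow> real"
  assumes "finite I" "0 \<le> N"
    and orth: "\<And>j l. j \<in> I \<Longrightarrow> l \<in> I \<Longrightarrow> (\<Sum>i\<in>I. h i j * h i l) = (if j = l then N else 0)"
  shows "\<bar>\<Sum>i\<in>I. \<Sum>j\<in>I. h i j * v i * v j\<bar> \<le> sqrt N * (\<Sum>i\<in>I. (v i)\<^sup>2)"
proof -
  define w where "w i = (\<Sum>j\<in>I. h i j * v j)" for i
  define S where "S = (\<Sum>i\<in>I. (v i)\<^sup>2)"
  have "(\<Sum>i\<in>I. (w i)\<^sup>2) = (\<Sum>i\<in>I. \<Sum>j\<in>I. \<Sum>l\<in>I. v j * v l * (h i j * h i l))"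
    unfolding w_def power2_eq_square sum_product by (simp add: ac_simps)
  also have "\<dots> = (\<Sum>j\<in>I. \<Sum>l\<in>I. \<Sum>i\<in>I. v j * v l * (h i j * h i l))"
    by (subst sum.swap) (rule sum.cong[OF refl], rule sum.swap)
  also have "\<dots> = (\<Sum>j\<in>I. \<Sum>l\<in>I. v j * v l * (if j = l then N else 0))"
    by (intro sum.cong refl) (simp add: orth flip: sum_distrib_left)
  also have "\<dots> = (\<Sum>j\<in>I. v j * v j * N)"
    using assms(1) by (simp add: if_distrib sum.delta cong: if_cong)
  finally have w_norm: "(\<Sum>i\<in>I. (w i)\<^sup>2) = N * S"
    unfolding S_def by (simp add: sum_distrib_left power2_eq_square ac_simps)
  have "(\<Sum>i\<in>I. v i * w i)\<^sup>2 \<le> S * (N * S)"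
    using Cauchy_Schwarz_ineq_sum[of v w I] unfolding w_norm S_def[symmetric] .
  also have "\<dots> = (sqrt N * S)\<^sup>2"
    using \<open>0 \<le> N\<close> by (simp add: power_mult_distrib power2_eq_square)
  finally have "\<bar>\<Sum>i\<in>I. v i * w i\<bar>\<^sup>2 \<le> (sqrt N * S)\<^sup>2"
    by (simp only: power2_abs)
  then have "\<bar>\<Sum>i\<in>I. v i * w i\<bar> \<le> sqrt N * S"
    by (rule power2_le_imp_le) (simp add: S_def sum_nonneg \<open>0 \<le> N\<close>)
  moreover have "(\<Sum>i\<in>I. \<Sum>j\<in>I. h i j * v i * v j) = (\<Sum>i\<in>I. v i * w i)"
    unfolding w_def sum_distrib_left by (intro sum.cong refl) (simp add: mult_ac)
  ultimately show ?thesis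
    unfolding S_def by simp
qed

lemma orthogonal_quadratic_form_subset_le:
  fixes h :: "'a \<Rightarrow> 'a \<Rightarrow> real"
  assumes "finite I" "J \<subseteq> I" "0 \<le> N"
    and "\<And>j l. j \<in> I \<Longrightarrow> l \<in> I \<Longrightarrow> (\<Sum>i\<in>I. h i j * h i l) = (if j = l then N else 0)"
  shows "\<bar>\<Sum>i\<in>J. \<Sum>j\<in>J. h i j * v i * v j\<bar> \<le> sqrt N * (\<Sum>i\<in>J. (v i)\<^sup>2)"
proof -
  define u where "u i = (if i \<in> J then v i else 0)" for i
  have restrict: "(\<Sum>i\<in>I. f i * u i) = (\<Sum>i\<in>J. f i * v i)" for f :: "'a \<Rightarrow> real"
  proof -
    have "(\<Sum>i\<in>I. f i * u i) = (\<Sum>i\<in>I. if i \<in> J then f i * v i else 0)"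
      by (intro sum.cong refl) (simp add: u_def)
    also have "\<dots> = (\<Sum>i\<in>I \<inter> J. f i * v i)"
      using assms(1) by (rule sum.inter_restrict[symmetric])
    also have "I \<inter> J = J" using assms(2) by blast
    finally show ?thesis .
  qed
  have "(\<Sum>i\<in>I. \<Sum>j\<in>I. h i j * u i * u j) = (\<Sum>i\<in>I. (\<Sum>j\<in>I. h i j * u j) * u i)"
    by (simp add: sum_distrib_left sum_distrib_right mult_ac)
  also have "\<dots> = (\<Sum>i\<in>J. (\<Sum>j\<in>J. h i j * v j) * v i)"
    by (simp only: restrict)
  also have "\<dots> = (\<Sum>i\<in>J. \<Sum>j\<in>J. h i j * v i * v j)"
    by (simp add: sum_distrib_left sum_distrib_right mult_ac)
  finally have "(\<Sum>i\<in>I. \<Sum>j\<in>I. h i j * u i * u j) = (\<Sum>i\<in>J. \<Sum>j\<in>J. h i j * v i * v j)" .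
  moreover have "(\<Sum>i\<in>I. (u i)\<^sup>2) = (\<Sum>i\<in>J. (v i)\<^sup>2)"
    using restrict[of u] by (simp add: power2_eq_square u_def cong: sum.cong)
  ultimately show ?thesis
    using orthogonal_quadratic_form_le[OF assms(1,3,4), of u] by (simp only:)
qed

lemma finite_edges [simp]: "finite (edges n)"
proof (rule finite_subset)
  show "edges n \<subseteq> {1..n} \<times> {1..n}" unfolding edges_def by auto
qed simp

lemma sum_square_eq_edges:
  fixes g :: "nat \<Rightarrow> nat \<Rightarrow> 'a::comm_monoid_add"
  shows "(\<Sum>i\<in>{1..n}. \<Sum>j\<in>{1..n}. g i j)
    = (\<Sum>e\<in>edges n. g (fst e) (snd e) + g (snd e) (fst e)) + (\<Sum>i\<in>{1..n}. g i i)"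
proof -
  let ?E = "edges n" and ?F = "prod.swap ` edges n" and ?D = "(\<lambda>i. (i, i)) ` {1..n}"
  have square: "{1..n} \<times> {1..n} = (?E \<union> ?F) \<union> ?D"
  proof (rule set_eqI, clarify)
    fix i j
    show "(i, j) \<in> {1..n} \<times> {1..n} \<longleftrightarrow> (i, j) \<in> (?E \<union> ?F) \<union> ?D"
      unfolding edges_def by (cases i j rule: linorder_cases) (auto simp: image_iff)
  qed
  have "(\<Sum>i\<in>{1..n}. \<Sum>j\<in>{1..n}. g i j) = (\<Sum>(i, j)\<in>(?E \<union> ?F) \<union> ?D. g i j)"
    unfolding sum.cartesian_product square ..
  also have "\<dots> = (\<Sum>(i, j)\<in>?E. g i j) + (\<Sum>(i, j)\<in>?F. g i j) + (\<Sum>(i, j)\<in>?D. g i j)"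
  proof -
    have "?E \<inter> ?F = {}" "(?E \<union> ?F) \<inter> ?D = {}" unfolding edges_def by auto
    then show ?thesis by (simp add: sum.union_disjoint)
  qed
  also have "(\<Sum>(i, j)\<in>?F. g i j) = (\<Sum>e\<in>?E. g (snd e) (fst e))"
    by (subst sum.reindex) (auto simp: inj_on_def case_prod_beta)
  also have "(\<Sum>(i, j)\<in>?D. g i j) = (\<Sum>i\<in>{1..n}. g i i)"
    by (simp add: sum.reindex inj_on_def)
  finally show ?thesis
    by (simp add: sum.distrib case_prod_beta)
qed

lemma card_edges: "real (card (edges n)) = real n * (real n - 1) / 2"
  using sum_square_eq_edges[of "\<lambda>_ _. 1::real" n] by (simp add: algebra_simps)

lemma walsh_edge_form_le:
  assumes "x \<in> cube n" "n \<le> 2 ^ K"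
  shows "\<bar>\<Sum>e\<in>edges n. walsh K (fst e) (snd e) * (x (fst e) - 1/2) * (x (snd e) - 1/2)\<bar>
    \<le> (sqrt (2 ^ K) + 1) * n / 8"
proof -
  define v where "v i = x i - 1/2" for i
  define r where "r = (\<Sum>e\<in>edges n. walsh K (fst e) (snd e) * v (fst e) * v (snd e))"
  define D where "D = (\<Sum>i\<in>{1..n}. walsh K i i * (v i)\<^sup>2)"
  define S where "S = (\<Sum>i\<in>{1..n}. (v i)\<^sup>2)"
  have "(\<Sum>i\<in>{1..n}. \<Sum>j\<in>{1..n}. walsh K i j * v i * v j) = 2 * r + D"
    unfolding r_def D_def sum_square_eq_edges
    by (simp add: walsh_commute[of K "snd _"] sum_distrib_left power2_eq_square mult_ac)
  moreover have "\<bar>\<Sum>i\<in>{1..n}. \<Sum>j\<in>{1..n}. walsh K i j * v i * v j\<bar> \<le> sqrt (2 ^ K) * S"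
    unfolding S_def using \<open>n \<le> 2 ^ K\<close>
    by (intro orthogonal_quadratic_form_subset_le[where I = "{1..2 ^ K}"] walsh_orthogonal) auto
  moreover have "\<bar>D\<bar> \<le> S"
    unfolding D_def S_def
    by (rule order_trans[OF sum_abs]) (simp add: abs_mult)
  moreover have "S \<le> n / 4"
  proof -
    have "(v i)\<^sup>2 \<le> 1/4" if "i \<in> {1..n}" for i
    proof -
      have "0 \<le> x i" "x i \<le> 1" using \<open>x \<in> cube n\<close> that unfolding cube_def by auto
      then have "0 \<le> x i * (1 - x i)" by simp
      moreover have "(v i)\<^sup>2 = 1/4 - x i * (1 - x i)"
        by (simp add: v_def power2_eq_square algebra_simps)
      ultimately show ?thesis by linarith
    qed
    then show ?thesis
      unfolding S_def using sum_bounded_above[of "{1..n}" "\<lambda>i. (v i)\<^sup>2" "1/4"] by simp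
  qed
  ultimately have "\<bar>2 * r\<bar> \<le> sqrt (2 ^ K) * S + S"
    by linarith
  also have "\<dots> = (sqrt (2 ^ K) + 1) * S"
    by (simp add: algebra_simps)
  also have "\<dots> \<le> (sqrt (2 ^ K) + 1) * (n / 4)"
    using \<open>S \<le> n / 4\<close> by (rule mult_left_mono) simp
  finally have "\<bar>r\<bar> \<le> (sqrt (2 ^ K) + 1) * n / 8"
    by simp
  then show ?thesis
    unfolding r_def v_def .
qed

definition convex_combination_preserving :: "((nat \<Rightarrow> real) \<Rightarrow> real) \<Rightarrow> bool" where
  "convex_combination_preserving f \<longleftrightarrow>
    (\<forall>(m::nat) u X. (\<Sum>l<m. u l) = 1 \<longrightarrow> f (\<lambda>i. \<Sum>l<m. u l * X l i) = (\<Sum>l<m. u l * f (X l)))"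

lemma convex_combination_preserving_edge_sum:
  "convex_combination_preserving (\<lambda>x. d + (\<Sum>e\<in>E. c e * (x (fst e) + x (snd e))))"
  unfolding convex_combination_preserving_def
proof (intro allI impI)
  fix m :: nat and u :: "nat \<Rightarrow> real" and X :: "nat \<Rightarrow> nat \<Rightarrow> real"
  assume u1: "(\<Sum>l<m. u l) = 1"
  have "(\<Sum>l<m. u l * (d + (\<Sum>e\<in>E. c e * (X l (fst e) + X l (snd e)))))
      = d + (\<Sum>l<m. \<Sum>e\<in>E. u l * (c e * (X l (fst e) + X l (snd e))))"
    using u1 by (simp add: distrib_left sum.distrib sum_distrib_left flip: sum_distrib_right)
  also have "\<dots> = d + (\<Sum>e\<in>E. c e * ((\<Sum>l<m. u l * X l (fst e)) + (\<Sum>l<m. u l * X l (snd e))))"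
    by (subst sum.swap) (simp add: sum_distrib_left distrib_left sum.distrib mult_ac)
  finally show "d + (\<Sum>e\<in>E. c e * ((\<Sum>l<m. u l * X l (fst e)) + (\<Sum>l<m. u l * X l (snd e))))
      = (\<Sum>l<m. u l * (d + (\<Sum>e\<in>E. c e * (X l (fst e) + X l (snd e)))))" ..
qed

lemma mem_convh: "p \<in> S \<Longrightarrow> p \<in> convh S"
  unfolding convh_def
  by (cases p) (auto intro!: exI[of _ 1] exI[of _ "\<lambda>_. p"] exI[of _ "\<lambda>_. 1"])

lemma convh_fibre_bound:
  assumes "convex_combination_preserving f"
    and "\<And>x w. (x, w) \<in> S \<Longrightarrow> \<bar>w - f x\<bar> \<le> R"
    and "(x, z) \<in> convh S"
  shows "\<bar>z - f x\<bar> \<le> R"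
proof -
  obtain m :: nat and p u where p: "\<And>l. l < m \<Longrightarrow> p l \<in> S" and u: "\<And>l. l < m \<Longrightarrow> 0 \<le> u l"
    and u1: "(\<Sum>l<m. u l) = 1" and x: "x = (\<lambda>i. \<Sum>l<m. u l * fst (p l) i)"
    and z: "z = (\<Sum>l<m. u l * snd (p l))"
    using \<open>(x, z) \<in> convh S\<close> unfolding convh_def by blast
  have "f x = (\<Sum>l<m. u l * f (fst (p l)))"
    unfolding x by (rule assms(1)[unfolded convex_combination_preserving_def, rule_format, OF u1])
  then have "\<bar>z - f x\<bar> = \<bar>\<Sum>l<m. u l * (snd (p l) - f (fst (p l)))\<bar>"
    by (simp add: z right_diff_distrib sum_subtractf)
  also have "\<dots> \<le> (\<Sum>l<m. u l * R)"
  proof (rule order_trans[OF sum_abs sum_mono])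
    fix l assume "l \<in> {..<m}"
    with p u assms(2)[of "fst (p l)" "snd (p l)"]
    show "\<bar>u l * (snd (p l) - f (fst (p l)))\<bar> \<le> u l * R"
      by (auto simp: abs_mult intro: mult_left_mono)
  qed
  also have "\<dots> = R"
    by (simp add: u1 flip: sum_distrib_right)
  finally show ?thesis .
qed

lemma chgap_le_of_convh_bound:
  assumes "x \<in> cube n" and "\<And>z. (x, z) \<in> convh (graphB n E a) \<Longrightarrow> \<bar>z - c\<bar> \<le> R"
  shows "chgap n E a x \<le> 2 * R"
proof -
  define C where "C = {z. (x, z) \<in> convh (graphB n E a)}"
  have "bilin E a x \<in> C"
    unfolding C_def graphB_def using \<open>x \<in> cube n\<close> by (auto intro: mem_convh)
  then have "C \<noteq> {}" by blast
  have "cav n E a x \<le> c + R"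
    unfolding cav_def C_def[symmetric]
    by (rule cSup_least[OF \<open>C \<noteq> {}\<close>]) (use assms(2) in \<open>force simp: C_def\<close>)
  moreover have "c - R \<le> vex n E a x"
    unfolding vex_def C_def[symmetric]
    by (rule cInf_greatest[OF \<open>C \<noteq> {}\<close>]) (use assms(2) in \<open>force simp: C_def\<close>)
  ultimately show ?thesis
    unfolding chgap_def by simp
qed

lemma bilin_centred:
  "bilin E a x = (\<Sum>e\<in>E. a e * (x (fst e) - 1/2) * (x (snd e) - 1/2))
    + ((\<Sum>e\<in>E. a e / 2 * (x (fst e) + x (snd e))) - (\<Sum>e\<in>E. a e) / 4)"
proof -
  have "(\<Sum>e\<in>E. a e * (x (fst e) - 1/2) * (x (snd e) - 1/2))
      + ((\<Sum>e\<in>E. a e / 2 * (x (fst e) + x (snd e))) - (\<Sum>e\<in>E. a e) / 4)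
    = (\<Sum>e\<in>E. a e * (x (fst e) - 1/2) * (x (snd e) - 1/2)
      + (a e / 2 * (x (fst e) + x (snd e)) - a e / 4))"
    by (simp add: sum.distrib sum_subtractf sum_divide_distrib)
  also have "\<dots> = bilin E a x"
    unfolding bilin_def by (intro sum.cong refl) (simp add: algebra_simps)
  finally show ?thesis by simp
qed

lemma chgap_walsh_le:
  assumes "n \<le> 2 ^ K"
  shows "chgap n (edges n) (\<lambda>e. walsh K (fst e) (snd e)) (\<lambda>i. if i \<in> {1..n} then 1/2 else 0)
    \<le> (sqrt (2 ^ K) + 1) * n / 4"
proof -
  define a where "a e = walsh K (fst e) (snd e)" for e
  define x0 :: "nat \<Rightarrow> real" where "x0 i = (if i \<in> {1..n} then 1/2 else 0)" for i
  define A where "A = (\<Sum>e\<in>edges n. a e)"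
  define f where "f x = - A / 4 + (\<Sum>e\<in>edges n. a e / 2 * (x (fst e) + x (snd e)))" for x
  have "convex_combination_preserving f"
    unfolding f_def by (rule convex_combination_preserving_edge_sum)
  moreover have "\<bar>w - f x\<bar> \<le> (sqrt (2 ^ K) + 1) * n / 8" if "(x, w) \<in> graphB n (edges n) a" for x w
    using that walsh_edge_form_le[OF _ assms, of x]
    unfolding graphB_def f_def A_def a_def by (simp add: bilin_centred[of _ _ x])
  moreover have "f x0 = A / 4"
  proof -
    have "(\<Sum>e\<in>edges n. a e / 2 * (x0 (fst e) + x0 (snd e))) = A / 2"
      unfolding A_def sum_divide_distrib by (intro sum.cong refl) (auto simp: x0_def edges_def)
    then show ?thesis unfolding f_def by simp
  qed
  ultimately have fibre: "\<bar>z - A / 4\<bar> \<le> (sqrt (2 ^ K) + 1) * n / 8"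
    if "(x0, z) \<in> convh (graphB n (edges n) a)" for z
    using convh_fibre_bound[OF _ _ that] by metis
  have "x0 \<in> cube n" unfolding cube_def x0_def by auto
  from this fibre have "chgap n (edges n) a x0 \<le> 2 * ((sqrt (2 ^ K) + 1) * n / 8)"
    by (rule chgap_le_of_convh_bound)
  then show ?thesis
    unfolding x0_def a_def by (simp add: mult.commute)
qed

lemma mcgap_centre_ge:
  assumes "E \<subseteq> edges n" and "\<And>e. e \<in> E \<Longrightarrow> \<bar>a e\<bar> \<le> 1"
  shows "(\<Sum>e\<in>E. (a e)\<^sup>2) / 2 \<le> mcgap n E a (\<lambda>i. if i \<in> {1..n} then 1/2 else 0)"
proof -
  define x0 :: "nat \<Rightarrow> real" where "x0 i = (if i \<in> {1..n} then 1/2 else 0)" for i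
  define M where "M = {z. (x0, z) \<in> mcQ n E a}"
  have "x0 \<in> cube n" unfolding cube_def x0_def by auto
  txt \<open>On the edges \<open>x0\<close> is \<open>1/2\<close>, so the McCormick constraints only ask for \<open>0 \<le> y \<le> 1/2\<close>.\<close>
  have feasible: "(\<Sum>e\<in>E. a e * ((1 + s * a e) / 4)) \<in> M" if "\<bar>s\<bar> = 1" for s
  proof -
    have "\<bar>s * a e\<bar> \<le> 1" if "e \<in> E" for e
      using assms(2)[OF that] \<open>\<bar>s\<bar> = 1\<close> by (simp add: abs_mult)
    then have "(x0, \<lambda>e. (1 + s * a e) / 4) \<in> mcP n E"
      using \<open>x0 \<in> cube n\<close> assms(1) unfolding mcP_def x0_def edges_def
      by (fastforce simp: abs_le_iff)
    then show ?thesis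
      unfolding M_def mcQ_def using \<open>x0 \<in> cube n\<close> by auto
  qed
  have bounded: "\<bar>z\<bar> \<le> (\<Sum>e\<in>E. \<bar>a e\<bar>)" if "z \<in> M" for z
  proof -
    obtain y where y: "(x0, y) \<in> mcP n E" and z: "z = (\<Sum>e\<in>E. a e * y e)"
      using \<open>z \<in> M\<close> unfolding M_def mcQ_def by auto
    have "\<bar>a e * y e\<bar> \<le> \<bar>a e\<bar>" if "e \<in> E" for e
    proof -
      have "0 \<le> y e" "y e \<le> 1" using y that unfolding mcP_def by auto
      then show ?thesis by (simp add: abs_mult mult_left_le)
    qed
    then show ?thesis
      unfolding z by (rule order_trans[OF sum_abs sum_mono]) simp
  qed
  have "(\<Sum>e\<in>E. a e * ((1 + a e) / 4)) \<le> mcu n E a x0"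
    unfolding mcu_def M_def[symmetric]
    using feasible[of 1] bounded
    by (intro cSup_upper bdd_aboveI[where M = "\<Sum>e\<in>E. \<bar>a e\<bar>"]) force+
  moreover have "mcl n E a x0 \<le> (\<Sum>e\<in>E. a e * ((1 - a e) / 4))"
    unfolding mcl_def M_def[symmetric]
    using feasible[of "-1"] bounded
    by (intro cInf_lower bdd_belowI[where m = "- (\<Sum>e\<in>E. \<bar>a e\<bar>)"]) force+
  moreover have "(\<Sum>e\<in>E. a e * ((1 + a e) / 4)) - (\<Sum>e\<in>E. a e * ((1 - a e) / 4))
      = (\<Sum>e\<in>E. (a e)\<^sup>2) / 2"
    by (simp add: sum_subtractf[symmetric] sum_divide_distrib field_simps power2_eq_square)
  ultimately show ?thesis
    unfolding mcgap_def x0_def by linarith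
qed

lemma kbits_bounds:
  assumes "1 \<le> n"
  shows "n \<le> 2 ^ kbits n" and "2 ^ kbits n \<le> 2 * n"
proof -
  have "0 \<le> log 2 (real n)" using assms by simp
  then have k: "real (kbits n) = real_of_int \<lceil>log 2 (real n)\<rceil>"
    unfolding kbits_def by simp
  have pow: "real (2 ^ kbits n) = 2 powr real (kbits n)"
    by (simp add: powr_realpow)
  have "real n = 2 powr log 2 (real n)" using assms by simp
  also have "\<dots> \<le> 2 powr real (kbits n)"
    unfolding k by (intro powr_mono) auto
  finally show "n \<le> 2 ^ kbits n"
    unfolding pow[symmetric] by linarith
  have "2 powr real (kbits n) \<le> 2 powr (log 2 (real n) + 1)"
    unfolding k by (intro powr_mono) linarith+
  also have "\<dots> = 2 * real n" using assms by (simp add: powr_add)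
  finally show "2 ^ kbits n \<le> 2 * n"
    unfolding pow[symmetric] by linarith
qed

lemma gap_ratio_arith:
  fixes n N :: real
  assumes "16 \<le> n" and "0 \<le> N" and "N \<le> 2 * n"
  shows "sqrt n / 3 * ((sqrt N + 1) * n / 4) \<le> n * (n - 1) / 4"
proof -
  have "sqrt n * sqrt N = sqrt (n * N)"
    by (simp add: real_sqrt_mult)
  also have "\<dots> \<le> sqrt (2 * (n * n))"
    using assms by (intro real_sqrt_le_mono) (simp add: mult_left_mono mult.assoc)
  also have "\<dots> = sqrt 2 * n"
    using assms(1) by (simp add: real_sqrt_mult)
  also have "\<dots> \<le> 3 / 2 * n"
  proof -
    have "sqrt 2 \<le> 3 / 2" by (rule real_le_lsqrt) (auto simp: power2_eq_square)
    then show ?thesis using assms(1) by (intro mult_right_mono) auto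
  qed
  finally have "sqrt n * sqrt N \<le> 3 / 2 * n" .
  moreover have "4 * sqrt n \<le> n"
  proof -
    have "4 \<le> sqrt n" using real_sqrt_le_mono[OF assms(1)] by simp
    then have "4 * sqrt n \<le> sqrt n * sqrt n" by (intro mult_right_mono) (use assms(1) in auto)
    then show ?thesis using assms(1) by simp
  qed
  ultimately have "sqrt n * (sqrt N + 1) \<le> 3 * (n - 1)"
    using assms(1) by (simp add: distrib_left)
  then have "sqrt n * (sqrt N + 1) * n \<le> 3 * (n - 1) * n"
    using assms(1) by (intro mult_right_mono) auto
  then show ?thesis
    by (simp add: field_simps)
qed

theorem mainTheorem7:
  fixes n :: nat
  assumes "n \<ge> 18"
  shows "mcgap n (edges n) (coef n) (\<lambda>i. if i \<in> {1..n} then 1/2 else 0)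
     \<ge> sqrt (real n) / 3 * chgap n (edges n) (coef n) (\<lambda>i. if i \<in> {1..n} then 1/2 else 0)"
proof -
  define K where "K = kbits n"
  have coef: "coef n = (\<lambda>e. walsh K (fst e) (snd e))"
    unfolding coef_def walsh_def K_def ..
  have "n \<le> 2 ^ K" "2 ^ K \<le> 2 * n"
    using kbits_bounds[of n] assms unfolding K_def by auto
  have "sqrt n / 3 * chgap n (edges n) (coef n) (\<lambda>i. if i \<in> {1..n} then 1/2 else 0)
      \<le> sqrt n / 3 * ((sqrt (2 ^ K) + 1) * n / 4)"
    unfolding coef using chgap_walsh_le[OF \<open>n \<le> 2 ^ K\<close>] by (intro mult_left_mono) auto
  also have "\<dots> \<le> real n * (real n - 1) / 4"
  proof (rule gap_ratio_arith)
    show "16 \<le> real n" using assms by simp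
    show "0 \<le> (2::real) ^ K" by simp
    have "real (2 ^ K) \<le> real (2 * n)"
      using \<open>2 ^ K \<le> 2 * n\<close> by (simp only: of_nat_le_iff)
    then show "(2::real) ^ K \<le> 2 * real n" by simp
  qed
  also have "\<dots> = (\<Sum>e\<in>edges n. (coef n e)\<^sup>2) / 2"
    by (simp add: coef card_edges)
  also have "\<dots> \<le> mcgap n (edges n) (coef n) (\<lambda>i. if i \<in> {1..n} then 1/2 else 0)"
    by (rule mcgap_centre_ge) (simp_all add: coef)
  finally show ?thesis .
qed

end
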